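(* Let $C,D\in\mathrm{Ch}_\Phi$ and let $\Psi$ be a root subsystem of $\Phi$. Then $C$ lifts $D_\Psi$ if and only if there exists a subset $X\subset\Phi^s(C)\cap\Phi^+(D)$ such that $\Psi=\mathbb R X\cap\Phi$. Moreover, if these conditions hold, then one can take $X=\Psi^s(D_\Psi)$.
   Context: $E$ is a finite-dimensional real Euclidean space with inner product $(\cdot,\cdot)$; $\Phi\subset E$ is a finite (reduced) root system (not necessarily spanning $E$, not necessarily crystallographic), with reflections $\omega_\alpha$ through $L_\alpha=\alpha^\perp$. A root subsystem is a nonempty $\Psi\subset\Phi$ stable under $\omega_\alpha$, $\alpha\in\Psi$. $\mathbb R X$ denotes the real linear span of $X$. For $X\subset\Phi$, $\mathrm{Ch}_X$ is the set of connected components of $E\setminus\bigcup_{\alpha\in X}L_\alpha$; for $D\in\mathrm{Ch}_\Phi$, $D_\Psi$ is the chamber of $\mathrm{Ch}_\Psi$ containing $D$. For $C\in\mathrm{Ch}_\Phi$, $\Phi^+(C)=\{\alpha\in\Phi:(e,\alpha)>0\ \forall e\in C\}$ and $\Phi^s(C)$ is the unique simple system of $\Phi$ contained in $\Phi^+(C)$ (a simple system is a linearly independent subset $S$ such that each root is a linear combination of elements of $S$ with all coefficients $\ge0$ or all $\le0$). Similarly $\Psi^+(F)$, $\Psi^s(F)$ for $F\in\mathrm{Ch}_\Psi$. A chamber $C\in\mathrm{Ch}_\Phi$ lifts $F\in\mathrm{Ch}_\Psi$ if $\Psi^s(F)\subset\Phi^s(C)$. *)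

theory Defs
  imports "HOL-Analysis.Analysis"
begin

text \<open>E is modelled by a type of class euclidean_space; (x,y) is the inner product x \<bullet> y.\<close>

definition refl_vec :: "'a::euclidean_space \<Rightarrow> 'a \<Rightarrow> 'a" where
  "refl_vec \<alpha> x = x - (2 * (x \<bullet> \<alpha>) / (\<alpha> \<bullet> \<alpha>)) *\<^sub>R \<alpha>"

definition hyperplane :: "'a::euclidean_space \<Rightarrow> 'a set" where
  "hyperplane \<alpha> = {x. x \<bullet> \<alpha> = 0}"

text \<open>Finite reduced root system (not necessarily spanning, not necessarily crystallographic).\<close>
definition root_system :: "'a::euclidean_space set \<Rightarrow> bool" where
  "root_system \<Phi> \<longleftrightarrow> finite \<Phi> \<and> 0 \<notin> \<Phi> \<and>
     (\<forall>\<alpha>\<in>\<Phi>. \<forall>\<beta>\<in>\<Phi>. refl_vec \<alpha> \<beta> \<in> \<Phi>) \<and>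
     (\<forall>\<alpha>\<in>\<Phi>. \<forall>c::real. c *\<^sub>R \<alpha> \<in> \<Phi> \<longrightarrow> c = 1 \<or> c = -1)"

definition root_subsystem :: "'a::euclidean_space set \<Rightarrow> 'a set \<Rightarrow> bool" where
  "root_subsystem \<Phi> \<Psi> \<longleftrightarrow> \<Psi> \<noteq> {} \<and> \<Psi> \<subseteq> \<Phi> \<and> (\<forall>\<alpha>\<in>\<Psi>. \<forall>\<beta>\<in>\<Psi>. refl_vec \<alpha> \<beta> \<in> \<Psi>)"

definition chambers :: "'a::euclidean_space set \<Rightarrow> 'a set set" where
  "chambers X = components (UNIV - (\<Union>\<alpha>\<in>X. hyperplane \<alpha>))"

definition chamber_of :: "'a::euclidean_space set \<Rightarrow> 'a set \<Rightarrow> 'a set" where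
  "chamber_of \<Psi> D = (THE F. F \<in> chambers \<Psi> \<and> D \<subseteq> F)"

definition pos_roots :: "'a::euclidean_space set \<Rightarrow> 'a set \<Rightarrow> 'a set" where
  "pos_roots \<Phi> C = {\<alpha>\<in>\<Phi>. \<forall>e\<in>C. e \<bullet> \<alpha> > 0}"

definition simple_system :: "'a::euclidean_space set \<Rightarrow> 'a set \<Rightarrow> bool" where
  "simple_system \<Phi> S \<longleftrightarrow> S \<subseteq> \<Phi> \<and> independent S \<and>
     (\<forall>\<alpha>\<in>\<Phi>. \<exists>c. \<alpha> = (\<Sum>s\<in>S. c s *\<^sub>R s) \<and>
        ((\<forall>s\<in>S. c s \<ge> 0) \<or> (\<forall>s\<in>S. c s \<le> 0)))"

definition simple_roots :: "'a::euclidean_space set \<Rightarrow> 'a set \<Rightarrow> 'a set" where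
  "simple_roots \<Phi> C = (THE S. simple_system \<Phi> S \<and> S \<subseteq> pos_roots \<Phi> C)"

definition lifts :: "'a::euclidean_space set \<Rightarrow> 'a set \<Rightarrow> 'a set \<Rightarrow> 'a set \<Rightarrow> bool" where
  "lifts \<Phi> \<Psi> C F \<longleftrightarrow> simple_roots \<Psi> F \<subseteq> simple_roots \<Phi> C"

end

theory Submission
  imports Defs
begin

text \<open>
  The positive roots of a chamber C span a pointed cone; an irredundant set of generators of this
  cone is pairwise obtuse and hence linearly independent, which gives the simple system
  \<Phi>^s(C), and comparing two simple systems inside \<Phi>^+(C) root by root shows it is unique.
  A subset X of \<Phi>^s(C) is a simple system of the root system \<real>X \<inter> \<Phi>, and by induction
  on the height, using that a simple reflection permutes the other positive roots, every
  reflection-closed set containing X contains \<real>X \<inter> \<Phi>. Since the positive roots of \<Psi> for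
  D_\<Psi> are \<Psi> \<inter> \<Phi>^+(D), both directions of the theorem follow from uniqueness of simple
  systems.
\<close>

section \<open>Nonnegative combinations\<close>

lemma sum_single_coeff_scaleR:
  fixes S :: "'a::real_vector set"
  assumes "finite S" "y \<in> S"
  shows "(\<Sum>u\<in>S. (if u = y then q else 0) *\<^sub>R u) = q *\<^sub>R y"
  using assms by (simp add: if_distrib[of "\<lambda>c. c *\<^sub>R _"] cong: if_cong)

lemma independent_sum_coeff_eq:
  fixes S :: "'a::euclidean_space set"
  assumes "independent S" "(\<Sum>s\<in>S. a s *\<^sub>R s) = (\<Sum>s\<in>S. b s *\<^sub>R s)" "x \<in> S"
  shows "a x = b x"
proof -
  have "(\<Sum>s\<in>S. (a s - b s) *\<^sub>R s) = 0"
    using assms(2) by (simp add: scaleR_diff_left sum_subtractf)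
  then show ?thesis
    using assms(1,3) independent_explicit[of S] by auto
qed

text \<open>Only meaningful for finite S: over an infinite set every sum is 0, so the cone is {0}.\<close>
definition nonneg_span :: "'a::real_vector set \<Rightarrow> 'a set" where
  "nonneg_span S = {x. \<exists>c. (\<forall>s\<in>S. c s \<ge> 0) \<and> x = (\<Sum>s\<in>S. c s *\<^sub>R s)}"

lemma nonneg_span_sumI: "\<forall>s\<in>S. c s \<ge> 0 \<Longrightarrow> (\<Sum>s\<in>S. c s *\<^sub>R s) \<in> nonneg_span S"
  unfolding nonneg_span_def by blast

lemma nonneg_spanE:
  assumes "x \<in> nonneg_span S"
  obtains c where "\<forall>s\<in>S. c s \<ge> 0" "x = (\<Sum>s\<in>S. c s *\<^sub>R s)"
  using assms unfolding nonneg_span_def by blast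

lemma nonneg_span_0: "0 \<in> nonneg_span S"
  unfolding nonneg_span_def by (auto intro: exI[of _ "\<lambda>_. 0"])

lemma nonneg_span_add:
  assumes "x \<in> nonneg_span S" "y \<in> nonneg_span S"
  shows "x + y \<in> nonneg_span S"
proof -
  obtain c d where "\<forall>s\<in>S. c s \<ge> 0" "x = (\<Sum>s\<in>S. c s *\<^sub>R s)"
    "\<forall>s\<in>S. d s \<ge> 0" "y = (\<Sum>s\<in>S. d s *\<^sub>R s)"
    using assms unfolding nonneg_span_def by blast
  then show ?thesis
    unfolding nonneg_span_def
    by (auto intro!: exI[of _ "\<lambda>s. c s + d s"] simp: scaleR_add_left sum.distrib)
qed

lemma nonneg_span_scale:
  assumes "x \<in> nonneg_span S" "a \<ge> 0"
  shows "a *\<^sub>R x \<in> nonneg_span S"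
proof -
  obtain c where "\<forall>s\<in>S. c s \<ge> 0" "x = (\<Sum>s\<in>S. c s *\<^sub>R s)"
    using assms(1) by (rule nonneg_spanE)
  with assms(2) show ?thesis
    unfolding nonneg_span_def by (auto intro!: exI[of _ "\<lambda>s. a * c s"] simp: scaleR_sum_right)
qed

lemma nonneg_span_base: "finite S \<Longrightarrow> s \<in> S \<Longrightarrow> s \<in> nonneg_span S"
  unfolding nonneg_span_def
  by (auto intro!: exI[of _ "\<lambda>u. if u = s then 1 else 0"] simp: sum_single_coeff_scaleR)

lemma nonneg_span_trans:
  assumes "finite T" "T \<subseteq> nonneg_span S" "x \<in> nonneg_span T"
  shows "x \<in> nonneg_span S"
proof -
  obtain c where "\<forall>t\<in>T. c t \<ge> 0" "x = (\<Sum>t\<in>T. c t *\<^sub>R t)"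
    using assms(3) unfolding nonneg_span_def by blast
  with assms(1,2) show ?thesis
    by (induction T arbitrary: x rule: finite_induct)
      (auto intro!: nonneg_span_0 nonneg_span_add nonneg_span_scale)
qed

lemma nonneg_span_uminus:
  assumes "- x \<in> nonneg_span S"
  shows "\<exists>c. (\<forall>s\<in>S. c s \<le> 0) \<and> x = (\<Sum>s\<in>S. c s *\<^sub>R s)"
proof -
  obtain c where "\<forall>s\<in>S. c s \<ge> 0" "- x = (\<Sum>s\<in>S. c s *\<^sub>R s)"
    using assms unfolding nonneg_span_def by blast
  then show ?thesis
    by (intro exI[of _ "\<lambda>s. - c s"]) (auto simp: sum_negf minus_equation_iff[of x])
qed

lemma exists_irredundant_generators:
  assumes "finite P"
  obtains S where "S \<subseteq> P" "P \<subseteq> nonneg_span S" "\<forall>t\<in>S. t \<notin> nonneg_span (S - {t})"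
proof -
  define generates where "generates S \<longleftrightarrow> S \<subseteq> P \<and> P \<subseteq> nonneg_span S" for S
  have "generates P"
    unfolding generates_def using assms nonneg_span_base by blast
  then obtain S where S: "generates S" and least: "\<And>S'. generates S' \<Longrightarrow> card S \<le> card S'"
    using ex_has_least_nat[of generates P card] by blast
  have fin: "finite S"
    using S assms finite_subset unfolding generates_def by blast
  have "t \<notin> nonneg_span (S - {t})" if "t \<in> S" for t
  proof
    assume "t \<in> nonneg_span (S - {t})"
    then have "S \<subseteq> nonneg_span (S - {t})"
      using fin nonneg_span_base[of "S - {t}"] by blast
    then have "generates (S - {t})"
      using S nonneg_span_trans[OF fin] unfolding generates_def by blast
    then show False
      using least card_Diff1_less[OF fin that] by fastforce
  qed
  with S that show ?thesis unfolding generates_def by blast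
qed

lemma nonneg_sum_eq_0_in_open_halfspace:
  fixes S :: "'a::euclidean_space set"
  assumes "finite S" "\<forall>s\<in>S. e \<bullet> s > 0" "\<forall>s\<in>S. b s \<ge> 0" "(\<Sum>s\<in>S. b s *\<^sub>R s) = 0"
  shows "\<forall>s\<in>S. b s = 0"
proof -
  have "(\<Sum>s\<in>S. b s * (e \<bullet> s)) = e \<bullet> (\<Sum>s\<in>S. b s *\<^sub>R s)"
    by (simp add: inner_sum_right)
  also have "\<dots> = 0" using assms(4) by simp
  finally have "(\<Sum>s\<in>S. b s * (e \<bullet> s)) = 0" .
  moreover have "b s * (e \<bullet> s) \<ge> 0" if "s \<in> S" for s
    using assms(2,3) that by (simp add: less_imp_le)
  ultimately show ?thesis
    using assms(1,2) sum_nonneg_eq_0_iff[of S "\<lambda>s. b s * (e \<bullet> s)"] by fastforce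
qed

lemma irredundant_generators_no_difference:
  fixes S :: "'a::euclidean_space set"
  assumes fin: "finite S" and pos: "\<forall>s\<in>S. e \<bullet> s > 0"
    and irredundant: "\<forall>t\<in>S. t \<notin> nonneg_span (S - {t})"
    and xy: "x \<in> S" "y \<in> S" "x \<noteq> y" and pq: "p > 0" "q > 0"
  shows "p *\<^sub>R x - q *\<^sub>R y \<notin> nonneg_span S"
proof
  assume "p *\<^sub>R x - q *\<^sub>R y \<in> nonneg_span S"
  then obtain a where a: "\<forall>u\<in>S. a u \<ge> 0" "p *\<^sub>R x - q *\<^sub>R y = (\<Sum>u\<in>S. a u *\<^sub>R u)"
    unfolding nonneg_span_def by blast
  define b where "b u = a u + (if u = y then q else 0) - (if u = x then p else 0)" for u
  have b_sum: "(\<Sum>u\<in>S. b u *\<^sub>R u) = 0"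
    using fin xy
    by (simp add: b_def scaleR_diff_left scaleR_add_left sum_subtractf sum.distrib
        sum_single_coeff_scaleR flip: a(2))
  have b_nonneg: "b u \<ge> 0" if "u \<in> S" "u \<noteq> x" for u
    using a(1) that pq unfolding b_def by auto
  have "b y \<noteq> 0"
    using a(1) xy pq unfolding b_def by (smt (verit))
  show False
  proof (cases "b x \<ge> 0")
    case True
    then show False
      using nonneg_sum_eq_0_in_open_halfspace[OF fin pos _ b_sum] b_nonneg \<open>b y \<noteq> 0\<close> xy(2)
      by metis
  next
    case False
    have "b x *\<^sub>R x + (\<Sum>u\<in>S - {x}. b u *\<^sub>R u) = 0"
      using b_sum sum.remove[OF fin xy(1), of "\<lambda>u. b u *\<^sub>R u"] by simp
    then have x_rel: "(- b x) *\<^sub>R x = (\<Sum>u\<in>S - {x}. b u *\<^sub>R u)"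
      by (simp add: neg_eq_iff_add_eq_0)
    have "x = (1 / - b x) *\<^sub>R ((- b x) *\<^sub>R x)"
      using False by simp
    also have "\<dots> = (\<Sum>u\<in>S - {x}. (b u / - b x) *\<^sub>R u)"
      unfolding x_rel by (simp add: scaleR_sum_right)
    finally have "x \<in> nonneg_span (S - {x})"
      unfolding nonneg_span_def using b_nonneg False
      by (auto intro!: exI[of _ "\<lambda>u. b u / - b x"] divide_nonneg_pos)
    then show False using irredundant xy(1) by blast
  qed
qed

lemma pairwise_obtuse_independent:
  fixes S :: "'a::euclidean_space set"
  assumes fin: "finite S" and pos: "\<forall>s\<in>S. e \<bullet> s > 0"
    and obtuse: "\<And>s t. s \<in> S \<Longrightarrow> t \<in> S \<Longrightarrow> s \<noteq> t \<Longrightarrow> s \<bullet> t \<le> 0"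
  shows "independent S"
  unfolding independent_explicit
proof (intro conjI allI impI ballI)
  fix c assume c0: "(\<Sum>s\<in>S. c s *\<^sub>R s) = 0"
  define cp where "cp s = max (c s) 0" for s
  define cn where "cn s = max (- c s) 0" for s
  have c_split: "c s = cp s - cn s" for s unfolding cp_def cn_def by auto
  define v where "v = (\<Sum>s\<in>S. cp s *\<^sub>R s)"
  have v_cn: "v = (\<Sum>s\<in>S. cn s *\<^sub>R s)"
    using c0 unfolding v_def c_split scaleR_diff_left sum_subtractf by simp
  \<comment> \<open>cp and cn have disjoint supports, so only obtuse pairs s \<noteq> u contribute.\<close>
  have "v \<bullet> v = (\<Sum>s\<in>S. \<Sum>u\<in>S. cp s * cn u * (s \<bullet> u))"
    by (subst (2) v_cn, unfold v_def)
      (simp add: inner_sum_left inner_sum_right sum_distrib_left mult_ac, rule sum.swap)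
  also have "\<dots> \<le> 0"
  proof (intro sum_nonpos)
    fix s u assume "s \<in> S" "u \<in> S"
    then show "cp s * cn u * (s \<bullet> u) \<le> 0"
      using obtuse[of s u] unfolding cp_def cn_def
      by (cases "s = u") (auto simp: max_def mult_nonneg_nonpos)
  qed
  finally have "v = 0"
    by (metis inner_eq_zero_iff inner_ge_zero order_antisym)
  moreover have "\<forall>s\<in>S. cp s \<ge> 0" "\<forall>s\<in>S. cn s \<ge> 0"
    unfolding cp_def cn_def by simp_all
  ultimately have "\<forall>s\<in>S. cp s = 0" "\<forall>s\<in>S. cn s = 0"
    using nonneg_sum_eq_0_in_open_halfspace[OF fin pos] v_def v_cn by metis+
  then show "c s = 0" if "s \<in> S" for s
    using that c_split by simp
qed (rule fin)

lemma nonneg_decomposition_support: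
  fixes S S' :: "'a::euclidean_space set"
  assumes fin: "finite S" and indep: "independent S'" and s': "s' \<in> S'"
    and c: "\<forall>s\<in>S. c s \<ge> 0" "s' = (\<Sum>s\<in>S. c s *\<^sub>R s)"
    and d_nonneg: "\<And>s t. s \<in> S \<Longrightarrow> t \<in> S' \<Longrightarrow> d s t \<ge> 0"
    and d_eq: "\<And>s. s \<in> S \<Longrightarrow> s = (\<Sum>t\<in>S'. d s t *\<^sub>R t)"
    and s: "s \<in> S" "c s > 0" and t: "t \<in> S'" "t \<noteq> s'"
  shows "d s t = 0"
proof -
  have fin': "finite S'"
    using indep independent_explicit by blast
  have "(\<Sum>t\<in>S'. (\<Sum>s\<in>S. c s * d s t) *\<^sub>R t) = (\<Sum>s\<in>S. c s *\<^sub>R (\<Sum>t\<in>S'. d s t *\<^sub>R t))"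
    by (simp add: scaleR_sum_right scaleR_sum_left sum.swap[of _ S])
  also have "\<dots> = s'"
    unfolding c(2) by (rule sum.cong[OF refl]) (metis d_eq)
  also have "\<dots> = (\<Sum>t\<in>S'. (if t = s' then 1 else 0) *\<^sub>R t)"
    using sum_single_coeff_scaleR[OF fin' s'] by simp
  finally have "(\<Sum>s\<in>S. c s * d s t) = (if t = s' then 1 else 0)"
    by (rule independent_sum_coeff_eq[OF indep _ t(1)])
  then have "(\<Sum>u\<in>S. c u * d u t) = 0"
    using t(2) by simp
  moreover have "\<forall>u\<in>S. c u * d u t \<ge> 0"
    using c(1) d_nonneg t(1) by simp
  ultimately have "\<forall>u\<in>S. c u * d u t = 0"
    using sum_nonneg_eq_0_iff[OF fin, of "\<lambda>u. c u * d u t"] by simp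
  then show ?thesis
    using s by fastforce
qed

lemma nonneg_span_generator_multiple:
  fixes S S' :: "'a::euclidean_space set"
  assumes fin: "finite S" and indep: "independent S'" and S_span: "S \<subseteq> nonneg_span S'"
    and s': "s' \<in> S'" "s' \<in> nonneg_span S" "s' \<noteq> 0"
  obtains s d where "s \<in> S" "d \<ge> 0" "s = d *\<^sub>R s'"
proof -
  have fin': "finite S'"
    using indep independent_explicit by blast
  obtain c where c: "\<forall>s\<in>S. c s \<ge> 0" "s' = (\<Sum>s\<in>S. c s *\<^sub>R s)"
    using s'(2) by (rule nonneg_spanE)
  have "\<exists>d. (\<forall>t\<in>S'. d t \<ge> 0) \<and> s = (\<Sum>t\<in>S'. d t *\<^sub>R t)" if "s \<in> S" for s
    using subsetD[OF S_span that] unfolding nonneg_span_def by simp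
  then obtain d where d: "\<And>s. s \<in> S \<Longrightarrow> (\<forall>t\<in>S'. d s t \<ge> 0) \<and> s = (\<Sum>t\<in>S'. d s t *\<^sub>R t)"
    by metis
  have d_nonneg: "\<And>s t. s \<in> S \<Longrightarrow> t \<in> S' \<Longrightarrow> d s t \<ge> 0"
    and d_eq: "\<And>s. s \<in> S \<Longrightarrow> s = (\<Sum>t\<in>S'. d s t *\<^sub>R t)"
    using d by meson+
  have "\<not> (\<forall>s\<in>S. c s = 0)"
    using c(2) s'(3) sum.neutral[of S "\<lambda>s. c s *\<^sub>R s"] by auto
  then obtain s where "s \<in> S" "c s \<noteq> 0"
    by blast
  then have s: "s \<in> S" "c s > 0"
    using c(1) by (auto simp: less_le)
  have "s = (\<Sum>t\<in>S'. d s t *\<^sub>R t)"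
    using d_eq[OF s(1)] .
  also have "\<dots> = (\<Sum>t\<in>S'. (if t = s' then d s s' else 0) *\<^sub>R t)"
    using nonneg_decomposition_support[OF fin indep s'(1) c d_nonneg d_eq s]
    by (intro sum.cong) auto
  also have "\<dots> = d s s' *\<^sub>R s'"
    using sum_single_coeff_scaleR[OF fin' s'(1)] .
  finally show ?thesis
    using that s(1) d_nonneg[OF s(1) s'(1)] by blast
qed

lemma exists_acute_summand:
  fixes \<alpha> :: "'a::real_inner"
  assumes "\<alpha> = (\<Sum>t\<in>T. c t *\<^sub>R t)" "\<forall>t\<in>T. c t \<ge> 0" "\<alpha> \<noteq> 0"
  shows "\<exists>t\<in>T. t \<bullet> \<alpha> > 0"
proof (rule ccontr)
  assume no_acute: "\<not> ?thesis"
  have "\<alpha> \<bullet> \<alpha> = (\<Sum>t\<in>T. c t * (t \<bullet> \<alpha>))"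
    by (subst (1) assms(1)) (simp add: inner_sum_left)
  also have "\<dots> \<le> 0"
  proof (rule sum_nonpos)
    show "c t * (t \<bullet> \<alpha>) \<le> 0" if "t \<in> T" for t
      using assms(2) no_acute that by (simp add: mult_nonneg_nonpos not_less)
  qed
  finally show False
    using assms(3) by (metis inner_gt_zero_iff not_le)
qed

section \<open>Root systems and chambers\<close>

lemma refl_vec_self: "\<alpha> \<noteq> 0 \<Longrightarrow> refl_vec \<alpha> \<alpha> = - \<alpha>"
  unfolding refl_vec_def by (simp add: scaleR_2)

lemma refl_vec_involutive:
  assumes "\<alpha> \<noteq> 0"
  shows "refl_vec \<alpha> (refl_vec \<alpha> x) = x"
proof -
  define k where "k = 2 * (x \<bullet> \<alpha>) / (\<alpha> \<bullet> \<alpha>)"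
  have "(x - k *\<^sub>R \<alpha>) \<bullet> \<alpha> = - (x \<bullet> \<alpha>)"
    using assms by (simp add: k_def inner_diff_left)
  then show ?thesis
    unfolding refl_vec_def k_def[symmetric] by (simp add: k_def)
qed

lemma root_system_finite: "root_system \<Phi> \<Longrightarrow> finite \<Phi>"
  unfolding root_system_def by blast

lemma root_system_nonzero: "root_system \<Phi> \<Longrightarrow> \<alpha> \<in> \<Phi> \<Longrightarrow> \<alpha> \<noteq> 0"
  unfolding root_system_def by blast

lemma root_system_refl_vec: "root_system \<Phi> \<Longrightarrow> \<alpha> \<in> \<Phi> \<Longrightarrow> \<beta> \<in> \<Phi> \<Longrightarrow> refl_vec \<alpha> \<beta> \<in> \<Phi>"
  unfolding root_system_def by blast

lemma root_system_reduced: "root_system \<Phi> \<Longrightarrow> \<alpha> \<in> \<Phi> \<Longrightarrow> c *\<^sub>R \<alpha> \<in> \<Phi> \<Longrightarrow> c = 1 \<or> c = -1"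
  unfolding root_system_def by blast

lemma root_system_uminus: "root_system \<Phi> \<Longrightarrow> \<alpha> \<in> \<Phi> \<Longrightarrow> - \<alpha> \<in> \<Phi>"
  by (metis refl_vec_self root_system_nonzero root_system_refl_vec)

lemma root_system_subset:
  assumes "root_system \<Phi>" "\<Psi> \<subseteq> \<Phi>" "\<forall>\<alpha>\<in>\<Psi>. \<forall>\<beta>\<in>\<Psi>. refl_vec \<alpha> \<beta> \<in> \<Psi>"
  shows "root_system \<Psi>"
  using assms finite_subset unfolding root_system_def by (metis subsetD)

lemma root_system_span_Int:
  assumes "root_system \<Phi>"
  shows "root_system (span T \<inter> \<Phi>)"
proof (rule root_system_subset[OF assms])
  show "\<forall>\<alpha>\<in>span T \<inter> \<Phi>. \<forall>\<beta>\<in>span T \<inter> \<Phi>. refl_vec \<alpha> \<beta> \<in> span T \<inter> \<Phi>"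
    using assms root_system_refl_vec unfolding refl_vec_def
    by (auto intro!: span_diff span_scale)
qed auto

lemma chamber_nonempty: "C \<in> chambers X \<Longrightarrow> C \<noteq> {}"
  unfolding chambers_def by (rule in_components_nonempty)

lemma chamber_connected: "C \<in> chambers X \<Longrightarrow> connected C"
  unfolding chambers_def by (rule in_components_connected)

lemma chamber_disjoint_hyperplane: "C \<in> chambers X \<Longrightarrow> \<alpha> \<in> X \<Longrightarrow> x \<in> C \<Longrightarrow> x \<bullet> \<alpha> \<noteq> 0"
  unfolding chambers_def hyperplane_def by (blast dest: in_components_subset)

lemma chamber_sign:
  assumes "C \<in> chambers X" "\<alpha> \<in> X"
  shows "(\<forall>e\<in>C. e \<bullet> \<alpha> > 0) \<or> (\<forall>e\<in>C. e \<bullet> \<alpha> < 0)"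
proof (rule ccontr)
  assume "\<not> ?thesis"
  then obtain x y where xy: "x \<in> C" "y \<in> C" "x \<bullet> \<alpha> \<le> 0" "0 \<le> y \<bullet> \<alpha>"
    by force
  then obtain z where "z \<in> C" "\<alpha> \<bullet> z = 0"
    using connected_ivt_hyperplane[OF chamber_connected[OF assms(1)] xy(1,2), of \<alpha> 0]
    by (auto simp: inner_commute)
  then show False
    using chamber_disjoint_hyperplane[OF assms] inner_commute by metis
qed

lemma pos_roots_or_uminus:
  assumes "root_system \<Phi>" "C \<in> chambers \<Phi>" "\<alpha> \<in> \<Phi>"
  shows "\<alpha> \<in> pos_roots \<Phi> C \<or> - \<alpha> \<in> pos_roots \<Phi> C"
  using chamber_sign[OF assms(2,3)] root_system_uminus[OF assms(1,3)] assms(3)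
  unfolding pos_roots_def by auto

lemma chamber_of:
  assumes D: "D \<in> chambers \<Phi>" and sub: "\<Psi> \<subseteq> \<Phi>"
  shows "chamber_of \<Psi> D \<in> chambers \<Psi>" "D \<subseteq> chamber_of \<Psi> D"
proof -
  define U where "U = UNIV - (\<Union>\<alpha>\<in>\<Psi>. hyperplane \<alpha>)"
  have "D \<subseteq> UNIV - (\<Union>\<alpha>\<in>\<Phi>. hyperplane \<alpha>)"
    using D unfolding chambers_def by (rule in_components_subset)
  then have DU: "D \<subseteq> U"
    using sub unfolding U_def by blast
  have "U \<noteq> {}"
    using DU chamber_nonempty[OF D] by blast
  then obtain F where F: "F \<in> components U" "D \<subseteq> F"
    using exists_component_superset[OF DU _ chamber_connected[OF D]] by blast
  have "chamber_of \<Psi> D = F"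
    unfolding chamber_of_def chambers_def U_def[symmetric]
  proof (rule the_equality)
    show "F' = F" if "F' \<in> components U \<and> D \<subseteq> F'" for F'
    proof -
      have "F' \<inter> F \<noteq> {}"
        using that F(2) chamber_nonempty[OF D] by blast
      then show ?thesis
        using components_nonoverlap[of F' U F] that F(1) by simp
    qed
  qed (use F in blast)
  then show "chamber_of \<Psi> D \<in> chambers \<Psi>" "D \<subseteq> chamber_of \<Psi> D"
    using F unfolding chambers_def U_def by simp_all
qed

lemma pos_roots_chamber_of:
  assumes D: "D \<in> chambers \<Phi>" and sub: "\<Psi> \<subseteq> \<Phi>"
  shows "pos_roots \<Psi> (chamber_of \<Psi> D) = \<Psi> \<inter> pos_roots \<Phi> D"
proof
  show "pos_roots \<Psi> (chamber_of \<Psi> D) \<subseteq> \<Psi> \<inter> pos_roots \<Phi> D"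
    using chamber_of(2)[OF assms] sub unfolding pos_roots_def by blast
  obtain e where e: "e \<in> D"
    using chamber_nonempty[OF D] by blast
  show "\<Psi> \<inter> pos_roots \<Phi> D \<subseteq> pos_roots \<Psi> (chamber_of \<Psi> D)"
    using chamber_sign[OF chamber_of(1)[OF assms]] chamber_of(2)[OF assms] e
    unfolding pos_roots_def by force
qed

section \<open>Simple systems\<close>

lemma simple_system_finite: "simple_system \<Phi> S \<Longrightarrow> finite S"
  unfolding simple_system_def using independent_explicit by blast

lemma simple_system_nonneg_span_cases:
  assumes "simple_system \<Phi> S" "\<alpha> \<in> \<Phi>"
  shows "\<alpha> \<in> nonneg_span S \<or> - \<alpha> \<in> nonneg_span S"
proof -
  obtain c where c: "\<alpha> = (\<Sum>s\<in>S. c s *\<^sub>R s)" "(\<forall>s\<in>S. c s \<ge> 0) \<or> (\<forall>s\<in>S. c s \<le> 0)"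
    using assms unfolding simple_system_def by blast
  have "- \<alpha> = (\<Sum>s\<in>S. (- c s) *\<^sub>R s)"
    using c(1) by (simp add: sum_negf)
  then show ?thesis
    using c nonneg_span_sumI[of S c] nonneg_span_sumI[of S "\<lambda>s. - c s"] by auto
qed

lemma simple_systemI:
  assumes "S \<subseteq> \<Phi>" "independent S"
    and "\<And>\<alpha>. \<alpha> \<in> \<Phi> \<Longrightarrow> \<alpha> \<in> nonneg_span S \<or> - \<alpha> \<in> nonneg_span S"
  shows "simple_system \<Phi> S"
  unfolding simple_system_def
proof (intro conjI ballI)
  fix \<alpha> assume "\<alpha> \<in> \<Phi>"
  from assms(3)[OF this]
  show "\<exists>c. \<alpha> = (\<Sum>s\<in>S. c s *\<^sub>R s) \<and> ((\<forall>s\<in>S. c s \<ge> 0) \<or> (\<forall>s\<in>S. c s \<le> 0))"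
  proof
    assume "\<alpha> \<in> nonneg_span S"
    then obtain c where "\<forall>s\<in>S. c s \<ge> 0" "\<alpha> = (\<Sum>s\<in>S. c s *\<^sub>R s)"
      by (rule nonneg_spanE)
    then show ?thesis by auto
  next
    assume "- \<alpha> \<in> nonneg_span S"
    then obtain c where "\<forall>s\<in>S. c s \<le> 0" "\<alpha> = (\<Sum>s\<in>S. c s *\<^sub>R s)"
      using nonneg_span_uminus by blast
    then show ?thesis by auto
  qed
qed (use assms in auto)

lemma irredundant_root_generators_obtuse:
  assumes rs: "root_system \<Phi>" and "S \<subseteq> \<Phi>" and fin: "finite S"
    and S_pos: "\<forall>s\<in>S. e \<bullet> s > 0" and irredundant: "\<forall>t\<in>S. t \<notin> nonneg_span (S - {t})"
    and root_nonneg_span: "\<And>\<alpha>. \<alpha> \<in> \<Phi> \<Longrightarrow> \<alpha> \<in> nonneg_span S \<or> - \<alpha> \<in> nonneg_span S"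
    and st: "s \<in> S" "t \<in> S" "s \<noteq> t"
  shows "s \<bullet> t \<le> 0"
proof (rule ccontr)
  define k where "k = 2 * (t \<bullet> s) / (s \<bullet> s)"
  assume "\<not> s \<bullet> t \<le> 0"
  moreover have "s \<noteq> 0"
    using S_pos st(1) by auto
  ultimately have k_pos: "k > 0"
    by (simp add: k_def inner_commute)
  have "refl_vec s t \<in> \<Phi>"
    using root_system_refl_vec[OF rs] st \<open>S \<subseteq> \<Phi>\<close> by blast
  then have "t - k *\<^sub>R s \<in> nonneg_span S \<or> k *\<^sub>R s - t \<in> nonneg_span S"
    using root_nonneg_span unfolding refl_vec_def k_def by fastforce
  moreover have "t - k *\<^sub>R s \<notin> nonneg_span S"
    using irredundant_generators_no_difference[OF fin S_pos irredundant st(2,1) not_sym[OF st(3)]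
        zero_less_one k_pos] by simp
  moreover have "k *\<^sub>R s - t \<notin> nonneg_span S"
    using irredundant_generators_no_difference[OF fin S_pos irredundant st k_pos zero_less_one]
    by simp
  ultimately show False
    by blast
qed

lemma exists_simple_system:
  assumes rs: "root_system \<Phi>" and C: "C \<in> chambers \<Phi>"
  shows "\<exists>S. simple_system \<Phi> S \<and> S \<subseteq> pos_roots \<Phi> C"
proof -
  define P where "P = pos_roots \<Phi> C"
  have P_sub: "P \<subseteq> \<Phi>"
    unfolding P_def pos_roots_def by blast
  obtain e where "e \<in> C"
    using chamber_nonempty[OF C] by blast
  then have pos: "\<forall>\<alpha>\<in>P. e \<bullet> \<alpha> > 0"
    unfolding P_def pos_roots_def by blast
  have "finite P"
    using root_system_finite[OF rs] P_sub finite_subset by blast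
  then obtain S where S_sub: "S \<subseteq> P" and P_span: "P \<subseteq> nonneg_span S"
    and irredundant: "\<forall>t\<in>S. t \<notin> nonneg_span (S - {t})"
    by (rule exists_irredundant_generators)
  have fin: "finite S"
    using \<open>finite P\<close> S_sub finite_subset by blast
  have S_pos: "\<forall>s\<in>S. e \<bullet> s > 0"
    using pos S_sub by blast
  have root_nonneg_span: "\<alpha> \<in> nonneg_span S \<or> - \<alpha> \<in> nonneg_span S" if "\<alpha> \<in> \<Phi>" for \<alpha>
    using pos_roots_or_uminus[OF rs C that] P_span unfolding P_def by blast
  have obtuse: "s \<bullet> t \<le> 0" if "s \<in> S" "t \<in> S" "s \<noteq> t" for s t
    using irredundant_root_generators_obtuse[OF rs _ fin S_pos irredundant root_nonneg_span] that
      S_sub P_sub by blast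
  have "simple_system \<Phi> S"
    using S_sub P_sub pairwise_obtuse_independent[OF fin S_pos obtuse] root_nonneg_span
    by (intro simple_systemI) auto
  then show ?thesis
    using S_sub unfolding P_def by blast
qed

lemma pos_roots_subset_nonneg_span:
  assumes S: "simple_system \<Phi> S" "S \<subseteq> pos_roots \<Phi> C" and "C \<noteq> {}"
  shows "pos_roots \<Phi> C \<subseteq> nonneg_span S"
proof
  fix \<alpha> assume \<alpha>: "\<alpha> \<in> pos_roots \<Phi> C"
  obtain e where e: "e \<in> C"
    using \<open>C \<noteq> {}\<close> by blast
  show "\<alpha> \<in> nonneg_span S"
  proof (rule ccontr)
    assume "\<alpha> \<notin> nonneg_span S"
    then obtain c where c: "\<forall>s\<in>S. c s \<le> 0" "\<alpha> = (\<Sum>s\<in>S. c s *\<^sub>R s)"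
      using \<alpha> S(1) unfolding simple_system_def pos_roots_def nonneg_span_def by blast
    have "e \<bullet> \<alpha> = (\<Sum>s\<in>S. c s * (e \<bullet> s))"
      unfolding c(2) by (simp add: inner_sum_right)
    also have "\<dots> \<le> 0"
      using c(1) S(2) e unfolding pos_roots_def by (force intro: sum_nonpos mult_nonpos_nonneg)
    finally show False
      using \<alpha> e unfolding pos_roots_def by fastforce
  qed
qed

lemma simple_system_unique:
  assumes rs: "root_system \<Phi>" and "C \<noteq> {}"
    and S: "simple_system \<Phi> S" "S \<subseteq> pos_roots \<Phi> C"
    and S': "simple_system \<Phi> S'" "S' \<subseteq> pos_roots \<Phi> C"
  shows "S' \<subseteq> S"
proof
  fix s' assume s': "s' \<in> S'"
  have "S' \<subseteq> \<Phi>" "S \<subseteq> \<Phi>" "independent S'"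
    using S S' unfolding simple_system_def by auto
  moreover have "S \<subseteq> nonneg_span S'" "s' \<in> nonneg_span S"
    using pos_roots_subset_nonneg_span[OF S' \<open>C \<noteq> {}\<close>] S(2)
      pos_roots_subset_nonneg_span[OF S \<open>C \<noteq> {}\<close>] S'(2) s' by blast+
  ultimately obtain s d where s: "s \<in> S" "d \<ge> 0" "s = d *\<^sub>R s'"
    using nonneg_span_generator_multiple[OF simple_system_finite[OF S(1)]] s'
      root_system_nonzero[OF rs] by blast
  then have "d = 1 \<or> d = -1"
    using root_system_reduced[OF rs, of s' d] s' \<open>S \<subseteq> \<Phi>\<close> \<open>S' \<subseteq> \<Phi>\<close> by blast
  then show "s' \<in> S"
    using s by auto
qed

lemma simple_roots_eq:
  assumes "root_system \<Phi>" "C \<in> chambers \<Phi>" "simple_system \<Phi> S" "S \<subseteq> pos_roots \<Phi> C"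
  shows "simple_roots \<Phi> C = S"
  unfolding simple_roots_def
proof (rule the_equality)
  show "S' = S" if "simple_system \<Phi> S' \<and> S' \<subseteq> pos_roots \<Phi> C" for S'
    using simple_system_unique[OF assms(1) chamber_nonempty[OF assms(2)]] assms(3,4) that
    by blast
qed (use assms in blast)

lemma simple_roots:
  assumes "root_system \<Phi>" "C \<in> chambers \<Phi>"
  shows "simple_system \<Phi> (simple_roots \<Phi> C)" "simple_roots \<Phi> C \<subseteq> pos_roots \<Phi> C"
  using exists_simple_system[OF assms] simple_roots_eq[OF assms] by auto

lemma simple_system_subset_span:
  assumes "simple_system \<Phi> S"
  shows "\<Phi> \<subseteq> span S"
proof
  fix \<alpha> assume "\<alpha> \<in> \<Phi>"
  then obtain c where "\<alpha> = (\<Sum>s\<in>S. c s *\<^sub>R s)"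
    using assms unfolding simple_system_def by blast
  then show "\<alpha> \<in> span S"
    by (simp add: span_sum span_scale span_base)
qed

lemma simple_system_span_Int:
  assumes S: "simple_system \<Phi> S" and TS: "T \<subseteq> S"
  shows "simple_system (span T \<inter> \<Phi>) T"
  unfolding simple_system_def
proof (intro conjI ballI)
  have indS: "independent S" and finS: "finite S"
    using S simple_system_finite unfolding simple_system_def by auto
  show "T \<subseteq> span T \<inter> \<Phi>"
    using S TS span_superset unfolding simple_system_def by blast
  show "independent T"
    using independent_mono[OF indS TS] .
  fix \<alpha> assume \<alpha>: "\<alpha> \<in> span T \<inter> \<Phi>"
  then obtain c where c: "\<alpha> = (\<Sum>s\<in>S. c s *\<^sub>R s)" "(\<forall>s\<in>S. c s \<ge> 0) \<or> (\<forall>s\<in>S. c s \<le> 0)"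
    using S unfolding simple_system_def by blast
  have "\<alpha> \<in> range (\<lambda>u. \<Sum>t\<in>T. u t *\<^sub>R t)"
    using \<alpha> span_finite[OF finite_subset[OF TS finS]] by blast
  then obtain u where u: "\<alpha> = (\<Sum>t\<in>T. u t *\<^sub>R t)"
    by blast
  \<comment> \<open>Extending u by zero gives a second expansion of \<alpha> over S.\<close>
  have "(\<Sum>s\<in>S. c s *\<^sub>R s) = (\<Sum>s\<in>S. (if s \<in> T then u s else 0) *\<^sub>R s)"
    unfolding c(1)[symmetric] u
    by (simp add: if_distrib[of "\<lambda>c. c *\<^sub>R _"] sum.inter_restrict[OF finS, symmetric]
        Int_absorb1[OF TS] cong: if_cong)
  from independent_sum_coeff_eq[OF indS this] have "c t = u t" if "t \<in> T" for t
    using that TS by auto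
  then have "\<alpha> = (\<Sum>t\<in>T. c t *\<^sub>R t)"
    unfolding u by (intro sum.cong) simp_all
  then show "\<exists>c. \<alpha> = (\<Sum>s\<in>T. c s *\<^sub>R s) \<and> ((\<forall>s\<in>T. c s \<ge> 0) \<or> (\<forall>s\<in>T. c s \<le> 0))"
    using c(2) TS by blast
qed

lemma positive_coeff_off_simple_root:
  assumes rs: "root_system \<Phi>" and S: "simple_system \<Phi> S" and t: "t \<in> S"
    and \<alpha>: "\<alpha> \<in> \<Phi>" "\<alpha> \<notin> S" and c: "\<forall>s\<in>S. c s \<ge> 0" "\<alpha> = (\<Sum>s\<in>S. c s *\<^sub>R s)"
  shows "\<exists>u\<in>S. u \<noteq> t \<and> c u > 0"
proof (rule ccontr)
  assume "\<not> ?thesis"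
  then have "\<forall>v\<in>S. v \<noteq> t \<longrightarrow> c v = 0"
    using c(1) by (auto simp: less_le)
  then have "\<alpha> = (\<Sum>v\<in>S. (if v = t then c t else 0) *\<^sub>R v)"
    unfolding c(2) by (intro sum.cong) auto
  then have \<alpha>_eq: "\<alpha> = c t *\<^sub>R t"
    using sum_single_coeff_scaleR[OF simple_system_finite[OF S] t] by simp
  moreover have "c t = 1 \<or> c t = -1"
    using root_system_reduced[OF rs, of t "c t"] \<alpha>(1) \<alpha>_eq t S
    unfolding simple_system_def by blast
  ultimately have "\<alpha> = t"
    using c(1) t by auto
  then show False
    using \<alpha>(2) t by blast
qed

lemma refl_vec_simple_nonneg_span:
  assumes rs: "root_system \<Phi>" and S: "simple_system \<Phi> S" and t: "t \<in> S"
    and \<alpha>: "\<alpha> \<in> \<Phi>" "\<alpha> \<notin> S" "\<alpha> \<in> nonneg_span S"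
  shows "refl_vec t \<alpha> \<in> nonneg_span S"
proof (rule ccontr)
  define k where "k = 2 * (\<alpha> \<bullet> t) / (t \<bullet> t)"
  have finS: "finite S" and indS: "independent S" and "S \<subseteq> \<Phi>"
    using S simple_system_finite unfolding simple_system_def by auto
  obtain c where c: "\<forall>s\<in>S. c s \<ge> 0" "\<alpha> = (\<Sum>s\<in>S. c s *\<^sub>R s)"
    using \<alpha>(3) by (rule nonneg_spanE)
  obtain u where u: "u \<in> S" "u \<noteq> t" "c u > 0"
    using positive_coeff_off_simple_root[OF rs S t \<alpha>(1,2) c] by blast
  assume "refl_vec t \<alpha> \<notin> nonneg_span S"
  moreover have "refl_vec t \<alpha> \<in> \<Phi>"
    using root_system_refl_vec[OF rs] t \<alpha>(1) \<open>S \<subseteq> \<Phi>\<close> by blast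
  ultimately have "- refl_vec t \<alpha> \<in> nonneg_span S"
    using simple_system_nonneg_span_cases[OF S] by blast
  then obtain c' where c': "\<forall>s\<in>S. c' s \<le> 0" "refl_vec t \<alpha> = (\<Sum>s\<in>S. c' s *\<^sub>R s)"
    using nonneg_span_uminus by blast
  have "refl_vec t \<alpha> = \<alpha> - k *\<^sub>R t"
    unfolding refl_vec_def k_def ..
  also have "\<dots> = (\<Sum>s\<in>S. (c s - (if s = t then k else 0)) *\<^sub>R s)"
    unfolding c(2) using sum_single_coeff_scaleR[OF finS t, of k]
    by (simp add: scaleR_diff_left sum_subtractf)
  finally have "(\<Sum>s\<in>S. c' s *\<^sub>R s) = (\<Sum>s\<in>S. (c s - (if s = t then k else 0)) *\<^sub>R s)"
    unfolding c'(2) .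
  then have "c' u = c u - (if u = t then k else 0)"
    by (rule independent_sum_coeff_eq[OF indS _ u(1)])
  then show False
    using c'(1) u by fastforce
qed


lemma exists_lowering_simple_reflection:
  fixes h :: "'a::euclidean_space \<Rightarrow> real"
  assumes rs: "root_system \<Phi>" and S: "simple_system \<Phi> S"
    and h: "linear h" "\<And>t. t \<in> S \<Longrightarrow> h t = 1"
    and \<alpha>: "\<alpha> \<in> \<Phi>" "\<alpha> \<notin> S" "\<alpha> \<in> nonneg_span S"
  obtains t where "t \<in> S" "refl_vec t \<alpha> \<in> \<Phi>" "refl_vec t \<alpha> \<in> nonneg_span S"
    "h (refl_vec t \<alpha>) < h \<alpha>"
proof -
  obtain c where c: "\<forall>s\<in>S. c s \<ge> 0" "\<alpha> = (\<Sum>s\<in>S. c s *\<^sub>R s)"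
    using \<alpha>(3) by (rule nonneg_spanE)
  obtain t where t: "t \<in> S" "t \<bullet> \<alpha> > 0"
    using exists_acute_summand[OF c(2) c(1) root_system_nonzero[OF rs \<alpha>(1)]] by blast
  moreover have "t \<noteq> 0"
    using t(2) by auto
  ultimately have "2 * (\<alpha> \<bullet> t) / (t \<bullet> t) > 0"
    by (simp add: inner_commute zero_less_divide_iff)
  moreover have "h (refl_vec t \<alpha>) = h \<alpha> - 2 * (\<alpha> \<bullet> t) / (t \<bullet> t)"
    unfolding refl_vec_def by (simp add: linear_diff[OF h(1)] linear_scale[OF h(1)] h(2)[OF t(1)])
  moreover have "refl_vec t \<alpha> \<in> \<Phi>"
    using root_system_refl_vec[OF rs _ \<alpha>(1)] t(1) S unfolding simple_system_def by blast
  ultimately show ?thesis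
    using that t(1) refl_vec_simple_nonneg_span[OF rs S t(1) \<alpha>] by simp
qed

lemma simple_system_generates:
  assumes rs: "root_system \<Phi>" and S: "simple_system \<Phi> S" and S_sub: "S \<subseteq> \<Psi>"
    and closed: "\<forall>\<alpha>\<in>\<Psi>. \<forall>\<beta>\<in>\<Psi>. refl_vec \<alpha> \<beta> \<in> \<Psi>"
  shows "\<Phi> \<subseteq> \<Psi>"
proof -
  have indS: "independent S" and "S \<subseteq> \<Phi>"
    using S unfolding simple_system_def by auto
  \<comment> \<open>The height function: the sum of the coordinates with respect to S.\<close>
  obtain h where h: "linear h" "\<And>t. t \<in> S \<Longrightarrow> h t = (1::real)"
    using linear_independent_extend[OF indS, of "\<lambda>_. 1"] by blast
  have pos: "\<alpha> \<in> \<Psi>" if "\<alpha> \<in> \<Phi>" "\<alpha> \<in> nonneg_span S" for \<alpha>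
    using that
  proof (induction "card {\<beta>\<in>\<Phi>. h \<beta> < h \<alpha>}" arbitrary: \<alpha> rule: less_induct)
    case less
    show ?case
    proof (cases "\<alpha> \<in> S")
      case True
      then show ?thesis using S_sub by blast
    next
      case False
      obtain t where t: "t \<in> S" and \<beta>: "refl_vec t \<alpha> \<in> \<Phi>" "refl_vec t \<alpha> \<in> nonneg_span S"
        and lower: "h (refl_vec t \<alpha>) < h \<alpha>"
        using exists_lowering_simple_reflection[OF rs S h less.prems(1) False less.prems(2)]
        by blast
      have "{\<gamma>\<in>\<Phi>. h \<gamma> < h (refl_vec t \<alpha>)} \<subset> {\<gamma>\<in>\<Phi>. h \<gamma> < h \<alpha>}"
        using lower \<beta>(1) by (auto intro: less_trans)
      then have "refl_vec t \<alpha> \<in> \<Psi>"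
        using less.hyps[OF psubset_card_mono \<beta>] root_system_finite[OF rs] by simp
      moreover have "refl_vec t (refl_vec t \<alpha>) = \<alpha>"
        using refl_vec_involutive root_system_nonzero[OF rs] t \<open>S \<subseteq> \<Phi>\<close> by blast
      ultimately show ?thesis
        using closed S_sub t by (metis subsetD)
    qed
  qed
  show ?thesis
  proof
    fix \<alpha> assume \<alpha>: "\<alpha> \<in> \<Phi>"
    show "\<alpha> \<in> \<Psi>"
    proof (cases "\<alpha> \<in> nonneg_span S")
      case True
      then show ?thesis using pos \<alpha> by blast
    next
      case False
      then have "- \<alpha> \<in> \<Psi>"
        using pos simple_system_nonneg_span_cases[OF S \<alpha>] root_system_uminus[OF rs \<alpha>] by blast
      moreover have "refl_vec (- \<alpha>) (- \<alpha>) = \<alpha>"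
        using refl_vec_self[of "- \<alpha>"] root_system_nonzero[OF rs \<alpha>] by simp
      ultimately show ?thesis
        using closed by metis
    qed
  qed
qed

section \<open>Lifting chambers of root subsystems\<close>

lemma lifts_chamber_of_imp:
  assumes rs: "root_system \<Phi>" and C: "C \<in> chambers \<Phi>" and D: "D \<in> chambers \<Phi>"
    and \<Psi>: "root_subsystem \<Phi> \<Psi>" and lifts: "lifts \<Phi> \<Psi> C (chamber_of \<Psi> D)"
  defines "X \<equiv> simple_roots \<Psi> (chamber_of \<Psi> D)"
  shows "X \<subseteq> simple_roots \<Phi> C \<inter> pos_roots \<Phi> D" "\<Psi> = span X \<inter> \<Phi>"
proof -
  have sub: "\<Psi> \<subseteq> \<Phi>" and closed: "\<forall>\<alpha>\<in>\<Psi>. \<forall>\<beta>\<in>\<Psi>. refl_vec \<alpha> \<beta> \<in> \<Psi>"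
    using \<Psi> unfolding root_subsystem_def by auto
  have X: "simple_system \<Psi> X" "X \<subseteq> pos_roots \<Psi> (chamber_of \<Psi> D)"
    using simple_roots[OF root_system_subset[OF rs sub closed] chamber_of(1)[OF D sub]]
    unfolding X_def by auto
  have X_sub: "X \<subseteq> simple_roots \<Phi> C"
    using lifts unfolding lifts_def X_def .
  then show "X \<subseteq> simple_roots \<Phi> C \<inter> pos_roots \<Phi> D"
    using X(2) pos_roots_chamber_of[OF D sub] by blast
  have "span X \<inter> \<Phi> \<subseteq> \<Psi>"
    using simple_system_generates[OF root_system_span_Int[OF rs]
        simple_system_span_Int[OF simple_roots(1)[OF rs C] X_sub] _ closed] X(1)
    unfolding simple_system_def by blast
  moreover have "\<Psi> \<subseteq> span X"
    using simple_system_subset_span[OF X(1)] .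
  ultimately show "\<Psi> = span X \<inter> \<Phi>"
    using sub by blast
qed

lemma lifts_chamber_of_if:
  assumes rs: "root_system \<Phi>" and C: "C \<in> chambers \<Phi>" and D: "D \<in> chambers \<Phi>"
    and X: "X \<subseteq> simple_roots \<Phi> C \<inter> pos_roots \<Phi> D" and \<Psi>: "\<Psi> = span X \<inter> \<Phi>"
  shows "lifts \<Phi> \<Psi> C (chamber_of \<Psi> D)"
proof -
  have simple: "simple_system \<Psi> X"
    unfolding \<Psi> using simple_system_span_Int[OF simple_roots(1)[OF rs C]] X by blast
  have sub: "\<Psi> \<subseteq> \<Phi>"
    unfolding \<Psi> by blast
  have "X \<subseteq> pos_roots \<Psi> (chamber_of \<Psi> D)"
    using simple X pos_roots_chamber_of[OF D sub] unfolding simple_system_def by blast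
  then have "simple_roots \<Psi> (chamber_of \<Psi> D) = X"
    using simple_roots_eq[OF _ chamber_of(1)[OF D sub] simple] root_system_span_Int[OF rs] \<Psi>
    by blast
  then show ?thesis
    unfolding lifts_def using X by blast
qed

theorem lemma2:
  fixes \<Phi> \<Psi> :: "'a::euclidean_space set" and C D :: "'a set"
  assumes "root_system \<Phi>"
    and "C \<in> chambers \<Phi>" and "D \<in> chambers \<Phi>"
    and "root_subsystem \<Phi> \<Psi>"
  shows "(lifts \<Phi> \<Psi> C (chamber_of \<Psi> D) \<longleftrightarrow>
            (\<exists>X. X \<subseteq> simple_roots \<Phi> C \<inter> pos_roots \<Phi> D \<and> \<Psi> = span X \<inter> \<Phi>))
         \<and> (lifts \<Phi> \<Psi> C (chamber_of \<Psi> D) \<longrightarrow>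
            (let X = simple_roots \<Psi> (chamber_of \<Psi> D) in
              X \<subseteq> simple_roots \<Phi> C \<inter> pos_roots \<Phi> D \<and> \<Psi> = span X \<inter> \<Phi>))"
  using lifts_chamber_of_imp[OF assms] lifts_chamber_of_if[OF assms(1-3)]
  unfolding Let_def by blast

end
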